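(* Let $\mathcal{C}$ be an $(n,k,d)$ linear MDS code over a finite field $\mathbb{F}_q$ with $d \ge 3$. Then $$\rho(\mathcal{C}) \ge \left\lfloor \frac{1}{d-1}\binom{n}{d-2}\right\rfloor + 1.$$
   Context: An $(n,k,d)$ linear MDS code is a linear code over $\mathbb{F}_q$ of length $n$, dimension $k$ and minimum Hamming distance $d = n-k+1$. A parity-check matrix for $\mathcal{C}$ is any matrix (possibly with linearly dependent rows) whose rows span $\mathcal{C}^\perp$. For a parity-check matrix $H$, the stopping distance $s(H)$ is the largest integer such that for every set of $s(H)-1$ or fewer columns of $H$, the projection of $H$ onto those columns contains at least one row with exactly one nonzero entry. The stopping redundancy $\rho(\mathcal{C})$ is the smallest number of rows of a parity-check matrix $H$ for $\mathcal{C}$ with $s(H) = d$. *)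

theory Defs
  imports "HOL-Analysis.Analysis"
begin

text \<open>Words of length n over a field 'a are vectors 'a^'n, with n = CARD('n).
  A parity-check matrix is a list of rows (repetitions / dependent rows allowed).\<close>

definition hweight :: "'a::zero ^ 'n \<Rightarrow> nat" where
  "hweight x = card {i. x $ i \<noteq> 0}"

definition linear_code :: "('a::field ^ 'n) set \<Rightarrow> bool" where
  "linear_code C \<longleftrightarrow> vec.subspace C"

definition has_min_distance :: "('a::field ^ 'n) set \<Rightarrow> nat \<Rightarrow> bool" where
  "has_min_distance C d \<longleftrightarrow>
     (\<forall>c\<in>C. c \<noteq> 0 \<longrightarrow> d \<le> hweight c) \<and> (\<exists>c\<in>C. c \<noteq> 0 \<and> hweight c = d)"

definition dual_code :: "('a::field ^ 'n) set \<Rightarrow> ('a ^ 'n) set" where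
  "dual_code C = {x. \<forall>c\<in>C. (\<Sum>i\<in>UNIV. x $ i * c $ i) = 0}"

definition parity_check :: "('a::field ^ 'n) set \<Rightarrow> ('a ^ 'n) list \<Rightarrow> bool" where
  "parity_check C H \<longleftrightarrow> vec.span (set H) = dual_code C"

definition stopping_ok :: "('a::zero ^ 'n) list \<Rightarrow> nat \<Rightarrow> bool" where
  "stopping_ok H s \<longleftrightarrow>
     (\<forall>S::'n set. S \<noteq> {} \<and> card S \<le> s - 1 \<longrightarrow>
        (\<exists>r\<in>set H. card {i\<in>S. r $ i \<noteq> 0} = 1))"

definition stopping_distance_is :: "('a::zero ^ 'n) list \<Rightarrow> nat \<Rightarrow> bool" where
  "stopping_distance_is H s \<longleftrightarrow> stopping_ok H s \<and> (\<forall>t>s. \<not> stopping_ok H t)"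

definition stopping_redundancy :: "('a::field ^ 'n) set \<Rightarrow> nat \<Rightarrow> nat" where
  "stopping_redundancy C d =
     (LEAST m. \<exists>H. parity_check C H \<and> length H = m \<and> stopping_distance_is H d)"

end

theory Submission
  imports Defs
begin

(* A parity-check matrix H of the MDS code C consists of dual codewords, and the dual of an MDS
   code is again MDS, so every nonzero row has at most d - 2 zeros. If s(H) = d, then every
   (d-1)-set S of coordinates contains the zero set of a row with exactly one nonzero entry in S;
   that zero set has exactly d - 2 elements and lies in precisely n - d + 2 such sets S. Double
   counting gives |H| (n - d + 2) >= C(n, d-1) = C(n, d-2) (n - d + 2) / (d - 1), and applying the
   stopping property to the zero set of a row itself makes the inequality strict. The minimum
   defining the stopping redundancy exists because the list of all dual codewords has s = d. *)

lemma binomial_Suc_mult_eq: "(n choose Suc m) * Suc m = (n choose m) * (n - m)"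
  using binomial_absorption[of m n] binomial_absorb_comp[of n m] by (simp add: mult.commute)

lemma binomial_less_mult_Suc:
  assumes "(n choose Suc m) < (n - m) * N"
  shows "(n choose m) < N * Suc m"
proof -
  have "(n choose m) * (n - m) = (n choose Suc m) * Suc m" by (rule binomial_Suc_mult_eq[symmetric])
  also have "\<dots> < (n - m) * N * Suc m" using assms by (intro mult_less_mono1) auto
  also have "\<dots> = (N * Suc m) * (n - m)" by (simp only: ac_simps)
  finally show ?thesis by (simp only: mult_less_cancel2)
qed

lemma card_supersets_of_one_more:
  fixes T :: "'n::finite set"
  shows "card {S. card S = Suc (card T) \<and> T \<subseteq> S} = CARD('n) - card T"
proof -
  have "{S. card S = Suc (card T) \<and> T \<subseteq> S} = (\<lambda>x. insert x T) ` (- T)"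
  proof (intro equalityI subsetI)
    fix S assume "S \<in> {S. card S = Suc (card T) \<and> T \<subseteq> S}"
    then have S: "card S = Suc (card T)" "T \<subseteq> S" by auto
    then have "card (S - T) = 1" by (simp add: card_Diff_subset)
    then obtain x where "S - T = {x}" by (rule card_1_singletonE)
    then show "S \<in> (\<lambda>x. insert x T) ` (- T)" using S(2) by blast
  qed auto
  moreover have "inj_on (\<lambda>x. insert x T) (- T)"
    by (rule inj_onI) (auto simp: insert_ident)
  ultimately show ?thesis by (simp add: card_image Compl_eq_Diff_UNIV card_Diff_subset)
qed

lemma sum_card_subsets_of_one_more:
  fixes G :: "'n::finite set set"
  assumes "\<forall>Z\<in>G. card Z = m"
  shows "(\<Sum>S\<in>{S. card S = Suc m}. card {Z\<in>G. Z \<subseteq> S}) = (CARD('n) - m) * card G"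
proof (rule sum_multicount)
  show "\<forall>Z\<in>G. card {S\<in>{S. card S = Suc m}. Z \<subseteq> S} = CARD('n) - m"
  proof
    fix Z assume "Z \<in> G"
    then have "card Z = m" using assms by blast
    then show "card {S\<in>{S. card S = Suc m}. Z \<subseteq> S} = CARD('n) - m"
      using card_supersets_of_one_more[of Z] by simp
  qed
qed auto

lemma subset_if_card_Diff_eq_1:
  assumes "finite Z" "card (S - Z) = 1" "card Z < card S"
  shows "Z \<subseteq> S" "card Z = card S - 1"
proof -
  have "finite S" by (metis assms(3) card.infinite less_zeroE)
  then have SZ: "card (S \<inter> Z) = card S - 1"
    by (metis Diff_Diff_Int Diff_subset assms(2) card_Diff_subset finite_Diff)
  have "card (S \<inter> Z) \<le> card Z" by (rule card_mono[OF assms(1)]) blast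
  then have "card (S \<inter> Z) = card Z" using SZ assms(3) by linarith
  then have "S \<inter> Z = Z" by (rule card_subset_eq[OF assms(1) Int_lower2])
  then show "Z \<subseteq> S" "card Z = card S - 1" using SZ by auto
qed

lemma stopping_family_covers:
  fixes F :: "'n::finite set set"
  assumes small: "\<forall>Z\<in>F. card Z \<le> m"
    and stop: "\<forall>S. S \<noteq> {} \<and> card S \<le> Suc m \<longrightarrow> (\<exists>Z\<in>F. card (S - Z) = 1)"
    and S: "card S = Suc m"
  shows "\<exists>Z\<in>F. card Z = m \<and> Z \<subseteq> S"
proof -
  have "S \<noteq> {}" using S by auto
  then have "\<exists>Z\<in>F. card (S - Z) = 1" using stop S by simp
  then obtain Z where Z: "Z \<in> F" "card (S - Z) = 1" by blast
  then have "card Z < card S" using small S by (simp add: le_imp_less_Suc)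
  then have "Z \<subseteq> S" "card Z = m" using subset_if_card_Diff_eq_1[OF finite Z(2)] S by auto
  then show ?thesis using Z(1) by blast
qed

lemma stopping_family_card_bound:
  fixes F :: "'n::finite set set"
  assumes m: "1 \<le> m" "m < CARD('n)"
    and small: "\<forall>Z\<in>F. card Z \<le> m"
    and stop: "\<forall>S. S \<noteq> {} \<and> card S \<le> Suc m \<longrightarrow> (\<exists>Z\<in>F. card (S - Z) = 1)"
  shows "(CARD('n) choose m) < card F * Suc m"
proof -
  define A where "A = {S::'n set. card S = Suc m}"
  define F' where "F' = {Z\<in>F. card Z = m}"
  let ?cover = "\<lambda>S. card {Z\<in>F'. Z \<subseteq> S}"
  have covered: "1 \<le> ?cover S" if "S \<in> A" for S
    using stopping_family_covers[OF small stop, of S] that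
    unfolding A_def F'_def by (auto simp: Suc_le_eq card_gt_0_iff)
  have double_count: "(\<Sum>S\<in>A. ?cover S) = (CARD('n) - m) * card F'"
    unfolding A_def by (rule sum_card_subsets_of_one_more) (simp add: F'_def)
  obtain S1 :: "'n set" where "card S1 = Suc m"
    using obtain_subset_with_card_n[of "Suc m" "UNIV :: 'n set"] m by auto
  then obtain Z0 where Z0: "Z0 \<in> F'"
    using covered[of S1] unfolding A_def by (auto simp: Suc_le_eq card_gt_0_iff)
  then have "Z0 \<noteq> {}" "card Z0 \<le> Suc m" using m unfolding F'_def by auto
  then obtain Z where Z: "Z \<in> F" "card (Z0 - Z) = 1" using stop by blast
  \<comment> \<open>Applying the stopping property to Z0 itself: either some (m+1)-set contains two members
    of F', or F has a member outside F' that covers nothing.\<close>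
  have "card A < (CARD('n) - m) * card F"
  proof (cases "Z \<in> F'")
    case True
    define S0 where "S0 = Z \<union> (Z0 - Z)"
    have "card S0 = Suc m"
      using True Z(2) unfolding S0_def F'_def by (subst card_Un_disjoint) auto
    then have S0A: "S0 \<in> A" unfolding A_def by simp
    have "Z \<noteq> Z0" using Z(2) by auto
    then have "card {Z0, Z} \<le> ?cover S0"
      using True Z0 by (intro card_mono) (auto simp: S0_def)
    then have "1 < ?cover S0" using \<open>Z \<noteq> Z0\<close> by simp
    then have "(\<Sum>S\<in>A. 1) < (\<Sum>S\<in>A. ?cover S)"
      using covered S0A by (intro sum_strict_mono_ex1) auto
    moreover have "card F' \<le> card F" unfolding F'_def by (intro card_mono) auto
    ultimately show ?thesis using double_count by (simp add: order_less_le_trans)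
  next
    case False
    then have "F' \<subset> F" using Z(1) unfolding F'_def by auto
    then have "card F' < card F" by (simp add: psubset_card_mono)
    moreover have "card A \<le> (\<Sum>S\<in>A. ?cover S)"
      using sum_mono[of A "\<lambda>_. 1" ?cover] covered by simp
    ultimately show ?thesis using double_count m(2) by (simp add: order_le_less_trans)
  qed
  moreover have "card A = CARD('n) choose Suc m"
    using n_subsets[of "UNIV :: 'n set" "Suc m"] unfolding A_def by simp
  ultimately show ?thesis by (intro binomial_less_mult_Suc) simp
qed

lemma subspace_dual_code: "vec.subspace (dual_code C)"
  unfolding vec.subspace_def dual_code_def
  by (auto simp: distrib_right sum.distrib mult.assoc sum_distrib_left[symmetric])

lemma dual_code_single_overlap_eq_0:
  fixes C :: "('a::field ^ 'n) set"
  assumes "x \<in> dual_code C" "c \<in> C" "\<forall>i. i \<noteq> j \<longrightarrow> x $ i * c $ i = 0"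
  shows "x $ j * c $ j = 0"
proof -
  have "(\<Sum>i\<in>UNIV. x $ i * c $ i) = x $ j * c $ j + (\<Sum>i\<in>UNIV - {j}. x $ i * c $ i)"
    by (rule sum.remove) auto
  also have "(\<Sum>i\<in>UNIV - {j}. x $ i * c $ i) = 0"
    using assms(3) by (intro sum.neutral) auto
  finally show ?thesis using assms(1,2) unfolding dual_code_def by auto
qed

lemma hweight_le_card: "hweight (x :: 'a::zero ^ 'n) \<le> CARD('n)"
  unfolding hweight_def by (rule card_mono) auto

lemma card_zeros_eq: "card {i. x $ i = 0} = CARD('n) - hweight (x :: 'a::zero ^ 'n)"
proof -
  have "{i. x $ i = 0} = UNIV - {i. x $ i \<noteq> 0}" by auto
  then show ?thesis unfolding hweight_def by (simp add: card_Diff_subset)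
qed

lemma parity_check_rows_in_dual_code: "parity_check C H \<Longrightarrow> set H \<subseteq> dual_code C"
  using vec.span_superset[of "set H"] unfolding parity_check_def by blast

lemma codeword_eq_0_if_vanishing:
  fixes C :: "('a::field ^ 'n) set"
  assumes "has_min_distance C d" "c \<in> C" "\<forall>l\<in>K. c $ l = 0" "CARD('n) < card K + d"
  shows "c = 0"
proof (rule ccontr)
  assume "c \<noteq> 0"
  then have "d \<le> hweight c" using assms(1,2) unfolding has_min_distance_def by auto
  also have "hweight c \<le> card (UNIV - K)" unfolding hweight_def
    by (rule card_mono) (use assms(3) in auto)
  also have "\<dots> = CARD('n) - card K" by (simp add: card_Diff_subset)
  finally have "d \<le> CARD('n) - card K" .
  moreover have "card K \<le> CARD('n)" by (rule card_mono) auto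
  ultimately show False using assms(4) by linarith
qed

lemma restriction_surjective:
  fixes C :: "('a::field ^ 'n) set"
  assumes sub: "vec.subspace C" and dim: "vec.dim C = card K"
    and inj: "\<forall>c\<in>C. (\<forall>l\<in>K. c $ l = 0) \<longrightarrow> c = 0"
  shows "\<exists>c\<in>C. \<forall>l\<in>K. c $ l = v $ l"
proof -
  define P :: "'a ^ 'n \<Rightarrow> 'a ^ 'n" where "P x = (\<chi> l. if l \<in> K then x $ l else 0)" for x
  define W where "W = vec.span ((\<lambda>l. axis l (1::'a)) ` K)"
  have lin: "Vector_Spaces.linear (*s) (*s) P"
    unfolding Vector_Spaces.linear_iff P_def by (auto simp: vec.vector_space_axioms vec_eq_iff)
  have P_agree: "x $ l = y $ l" if "P x = P y" "l \<in> K" for x y l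
    using arg_cong[OF that(1), of "\<lambda>v. v $ l"] that(2) by (simp add: P_def)
  have "inj_on P C"
  proof (rule inj_onI)
    fix x y assume "x \<in> C" "y \<in> C" "P x = P y"
    have "\<forall>l\<in>K. (x - y) $ l = 0" using P_agree[OF \<open>P x = P y\<close>] by simp
    moreover have "x - y \<in> C" using sub \<open>x \<in> C\<close> \<open>y \<in> C\<close> by (rule vec.subspace_diff)
    ultimately show "x = y" using inj by auto
  qed
  moreover have "vec.span C = C" using sub by simp
  ultimately have dimPC: "vec.dim (P ` C) = card K"
    using vec.dim_image_eq[OF lin, of C] dim by metis
  have P_in_W: "P x \<in> W" for x
  proof -
    have "P x = (\<Sum>l\<in>K. x $ l *s axis l 1)"
      by (auto simp: P_def vec_eq_iff axis_def if_distrib cong: if_cong)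
    also have "\<dots> \<in> W" unfolding W_def
      by (intro vec.span_sum vec.span_scale vec.span_base) auto
    finally show ?thesis .
  qed
  have "vec.dim W \<le> card ((\<lambda>l. axis l (1::'a)) ` K)"
    unfolding W_def by (rule vec.dim_le_card) auto
  also have "\<dots> \<le> card K" by (rule card_image_le) simp
  finally have "vec.dim W \<le> vec.dim (P ` C)" using dimPC by simp
  moreover have "vec.subspace W" unfolding W_def by (rule vec.subspace_span)
  ultimately have "P ` C = W"
    using vec.subspace_dim_equal[OF vec.linear_subspace_image[OF lin sub]] P_in_W by blast
  then obtain c where "c \<in> C" "P c = P v" using P_in_W by (metis imageE)
  then show ?thesis using P_agree[OF \<open>P c = P v\<close>] by blast
qed

lemma stopping_ok_le_hweight:
  fixes C :: "('a::field ^ 'n) set"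
  assumes rows: "set H \<subseteq> dual_code C" and "c \<in> C" "c \<noteq> 0" and stop: "stopping_ok H t"
  shows "t \<le> hweight c"
proof (rule ccontr)
  assume "\<not> t \<le> hweight c"
  define S where "S = {i. c $ i \<noteq> 0}"
  have "S \<noteq> {}" "card S \<le> t - 1"
    using \<open>c \<noteq> 0\<close> \<open>\<not> t \<le> hweight c\<close> unfolding S_def hweight_def by (auto simp: vec_eq_iff)
  then obtain r where r: "r \<in> set H" "card {i\<in>S. r $ i \<noteq> 0} = 1"
    using stop unfolding stopping_ok_def by blast
  obtain j where j: "{i\<in>S. r $ i \<noteq> 0} = {j}" using r(2) by (rule card_1_singletonE)
  then have "\<forall>i. i \<noteq> j \<longrightarrow> r $ i * c $ i = 0" unfolding S_def by auto
  then have "r $ j * c $ j = 0"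
    using dual_code_single_overlap_eq_0 rows r(1) \<open>c \<in> C\<close> by blast
  then show False using j unfolding S_def by auto
qed

lemma stopping_ok_length_bound:
  fixes H :: "('a::zero ^ 'n) list"
  assumes m: "1 \<le> m" "m < CARD('n)"
    and zeros: "\<forall>r\<in>set H. r \<noteq> 0 \<longrightarrow> card {i. r $ i = 0} \<le> m"
    and stop: "stopping_ok H (Suc (Suc m))"
  shows "(CARD('n) choose m) < length H * Suc m"
proof -
  define F where "F = (\<lambda>r. {i. r $ i = 0}) ` (set H - {0})"
  have small: "\<forall>Z\<in>F. card Z \<le> m" using zeros unfolding F_def by blast
  have "\<forall>S. S \<noteq> {} \<and> card S \<le> Suc m \<longrightarrow> (\<exists>Z\<in>F. card (S - Z) = 1)"
  proof (intro allI impI)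
    fix S :: "'n set" assume "S \<noteq> {} \<and> card S \<le> Suc m"
    then obtain r where r: "r \<in> set H" "card {i\<in>S. r $ i \<noteq> 0} = 1"
      using stop unfolding stopping_ok_def by auto
    have "r \<noteq> 0"
    proof
      assume "r = 0"
      then show False using r(2) by simp
    qed
    then have "{i. r $ i = 0} \<in> F" unfolding F_def using r(1) by (intro image_eqI[of _ _ r]) simp_all
    moreover have "S - {i. r $ i = 0} = {i\<in>S. r $ i \<noteq> 0}" by auto
    ultimately show "\<exists>Z\<in>F. card (S - Z) = 1" using r(2) by metis
  qed
  then have "(CARD('n) choose m) < card F * Suc m" by (rule stopping_family_card_bound[OF m small])
  also have "\<dots> \<le> length H * Suc m"
  proof (rule mult_le_mono1)
    have "card F \<le> card (set H - {0})" unfolding F_def by (rule card_image_le) simp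
    also have "\<dots> \<le> card (set H)" by (rule card_mono) auto
    also have "\<dots> \<le> length H" by (rule card_length)
    finally show "card F \<le> length H" .
  qed
  finally show ?thesis .
qed

locale mds_code =
  fixes C :: "('a::{field,finite} ^ 'n) set" and k d :: nat
  assumes subspace: "vec.subspace C"
    and dim: "vec.dim C = k"
    and min_distance: "has_min_distance C d"
    and singleton_bound_eq: "d = CARD('n) - k + 1"
begin

lemma dim_le_length: "k \<le> CARD('n)"
  using dim_subset_UNIV_cart_gen[of C] dim by simp

lemma min_weight_codeword: obtains c where "c \<in> C" "c \<noteq> 0" "hweight c = d"
  using min_distance unfolding has_min_distance_def by auto

lemma min_distance_le_length: "d \<le> CARD('n)"
  by (metis min_weight_codeword hweight_le_card)

lemma codeword_eq_0_if_vanishing_on_info_set: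
  assumes "card K = k" "c \<in> C" "\<forall>l\<in>K. c $ l = 0"
  shows "c = 0"
  using codeword_eq_0_if_vanishing[OF min_distance assms(2,3)] assms(1) dim_le_length singleton_bound_eq
  by linarith

lemma codeword_with_restriction:
  assumes "card K = k"
  obtains c where "c \<in> C" "\<forall>l\<in>K. c $ l = v $ l"
proof -
  have "\<forall>c\<in>C. (\<forall>l\<in>K. c $ l = 0) \<longrightarrow> c = 0"
    using codeword_eq_0_if_vanishing_on_info_set assms by blast
  then show thesis using restriction_surjective[OF subspace] dim assms that by metis
qed

lemma codeword_eq_sum_info_set:
  assumes K: "card K = k" and u: "\<forall>l\<in>K. u l \<in> C \<and> (\<forall>i\<in>K. u l $ i = axis l 1 $ i)"
    and "c \<in> C"
  shows "c = (\<Sum>l\<in>K. c $ l *s u l)"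
proof -
  have "(\<Sum>l\<in>K. c $ l *s u l) \<in> C"
    using u by (intro vec.subspace_sum[OF subspace] vec.subspace_scale[OF subspace]) auto
  then have "c - (\<Sum>l\<in>K. c $ l *s u l) \<in> C"
    using subspace \<open>c \<in> C\<close> by (simp add: vec.subspace_diff)
  moreover have "(c - (\<Sum>l\<in>K. c $ l *s u l)) $ i = 0" if "i \<in> K" for i
  proof -
    have "(\<Sum>l\<in>K. c $ l *s u l) $ i = (\<Sum>l\<in>K. if l = i then c $ i else 0)"
      unfolding sum_component using u that by (intro sum.cong) (auto simp: axis_def)
    then show ?thesis using that by simp
  qed
  ultimately have "c - (\<Sum>l\<in>K. c $ l *s u l) = 0"
    using codeword_eq_0_if_vanishing_on_info_set[OF K] by blast
  then show ?thesis by simp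
qed

lemma dual_codeword_weight_gt:
  assumes r: "r \<in> dual_code C" "r \<noteq> 0"
  shows "k < hweight r"
proof (rule ccontr)
  assume "\<not> k < hweight r"
  then obtain K where K: "{i. r $ i \<noteq> 0} \<subseteq> K" "card K = k"
    using exists_subset_between[of "{i. r $ i \<noteq> 0}" k UNIV] dim_le_length
    unfolding hweight_def by auto
  obtain p where p: "r $ p \<noteq> 0" using r(2) by (auto simp: vec_eq_iff)
  obtain c where c: "c \<in> C" "\<forall>l\<in>K. c $ l = axis p 1 $ l"
    using codeword_with_restriction[OF K(2)] by blast
  have "\<forall>i. i \<noteq> p \<longrightarrow> r $ i * c $ i = 0"
    using K(1) c(2) by (auto simp: axis_def)
  then have "r $ p * c $ p = 0" using dual_code_single_overlap_eq_0 r(1) c(1) by blast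
  moreover have "c $ p = 1" using K(1) c(2) p by (auto simp: axis_def)
  ultimately show False using p by simp
qed

lemma dual_codeword_single_on:
  assumes S: "card S + k \<le> CARD('n)" and "j \<in> S"
  shows "\<exists>x\<in>dual_code C. x $ j \<noteq> 0 \<and> (\<forall>i\<in>S - {j}. x $ i = 0)"
proof -
  have "k \<le> card (- S)" using S by (simp add: Compl_eq_Diff_UNIV card_Diff_subset)
  then obtain K where K: "K \<subseteq> - S" "card K = k"
    using obtain_subset_with_card_n by metis
  have "\<forall>l\<in>K. \<exists>c. c \<in> C \<and> (\<forall>i\<in>K. c $ i = axis l 1 $ i)"
    using codeword_with_restriction[OF K(2)] by metis
  then obtain u where u: "\<forall>l\<in>K. u l \<in> C \<and> (\<forall>i\<in>K. u l $ i = axis l 1 $ i)"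
    by metis
  \<comment> \<open>x is orthogonal to C because every codeword c equals the sum of c $ l *s u l over l in K.\<close>
  define x where "x = (\<chi> i. if i = j then 1 else if i \<in> K then - (u i $ j) else (0::'a))"
  have "(\<Sum>i\<in>UNIV. x $ i * c $ i) = 0" if "c \<in> C" for c
  proof -
    have jK: "j \<notin> K" using K(1) \<open>j \<in> S\<close> by auto
    have "(\<Sum>i\<in>UNIV. x $ i * c $ i)
        = (\<Sum>i\<in>UNIV. (if i = j then c $ j else 0) - (if i \<in> K then u i $ j * c $ i else 0))"
      using jK by (intro sum.cong) (auto simp: x_def)
    also have "\<dots> = c $ j - (\<Sum>i\<in>K. c $ i * u i $ j)"
      by (simp add: sum_subtractf sum.inter_restrict[symmetric] mult.commute)
    also have "\<dots> = 0"
      using arg_cong[OF codeword_eq_sum_info_set[OF K(2) u that], of "\<lambda>v. v $ j"] by simp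
    finally show ?thesis .
  qed
  then have "x \<in> dual_code C" unfolding dual_code_def by blast
  moreover have "x $ j \<noteq> 0" "\<forall>i\<in>S - {j}. x $ i = 0" using K(1) by (auto simp: x_def)
  ultimately show ?thesis by blast
qed

lemma stopping_ok_if_rows_dual_code:
  assumes "set H = dual_code C"
  shows "stopping_ok H d"
  unfolding stopping_ok_def
proof (intro allI impI)
  fix S :: "'n set" assume S: "S \<noteq> {} \<and> card S \<le> d - 1"
  then obtain j where "j \<in> S" by auto
  moreover have "card S + k \<le> CARD('n)" using S singleton_bound_eq dim_le_length by linarith
  ultimately obtain x where x: "x \<in> dual_code C" "x $ j \<noteq> 0" "\<forall>i\<in>S - {j}. x $ i = 0"
    using dual_codeword_single_on by blast
  then have "{i\<in>S. x $ i \<noteq> 0} = {j}" using \<open>j \<in> S\<close> by auto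
  then show "\<exists>r\<in>set H. card {i\<in>S. r $ i \<noteq> 0} = 1" using x(1) assms by (intro bexI[of _ x]) auto
qed

lemma stopping_distance_is_iff:
  assumes "parity_check C H"
  shows "stopping_distance_is H d \<longleftrightarrow> stopping_ok H d"
proof -
  obtain c where c: "c \<in> C" "c \<noteq> 0" "hweight c = d" by (rule min_weight_codeword)
  have "t \<le> d" if "stopping_ok H t" for t
    using stopping_ok_le_hweight[OF parity_check_rows_in_dual_code[OF assms] c(1,2) that] c(3)
    by simp
  then show ?thesis unfolding stopping_distance_is_def by (meson not_le)
qed

lemma stopping_redundancy_attained:
  obtains H where "parity_check C H" "length H = stopping_redundancy C d" "stopping_ok H d"
proof -
  obtain H0 where H0: "set H0 = dual_code C" using finite_list[of "dual_code C"] by auto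
  then have "parity_check C H0"
    unfolding parity_check_def using subspace_dual_code by simp
  moreover have "stopping_distance_is H0 d"
    using stopping_distance_is_iff[OF \<open>parity_check C H0\<close>] stopping_ok_if_rows_dual_code[OF H0]
    by simp
  ultimately have "\<exists>m H. parity_check C H \<and> length H = m \<and> stopping_distance_is H d" by blast
  from LeastI_ex[OF this] obtain H where
    H: "parity_check C H" "length H = stopping_redundancy C d" "stopping_distance_is H d"
    unfolding stopping_redundancy_def by blast
  have "stopping_ok H d" using H(3) stopping_distance_is_iff[OF H(1)] by simp
  with H(1,2) show thesis by (rule that)
qed

lemma stopping_redundancy_lower_bound:
  assumes "3 \<le> d"
  shows "(CARD('n) choose (d - 2)) < stopping_redundancy C d * (d - 1)"
proof -
  obtain H where H: "parity_check C H" "length H = stopping_redundancy C d" "stopping_ok H d"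
    by (rule stopping_redundancy_attained)
  have "card {i. r $ i = 0} \<le> d - 2" if "r \<in> set H" "r \<noteq> 0" for r
  proof -
    have "k < hweight r"
      using that parity_check_rows_in_dual_code[OF H(1)] by (auto intro: dual_codeword_weight_gt)
    then show ?thesis
      unfolding card_zeros_eq using singleton_bound_eq hweight_le_card[of r] by linarith
  qed
  moreover have "Suc (Suc (d - 2)) = d" "Suc (d - 2) = d - 1" using assms by arith+
  moreover have "1 \<le> d - 2" "d - 2 < CARD('n)" using assms min_distance_le_length by auto
  ultimately show ?thesis using stopping_ok_length_bound[of "d - 2" H] H(2,3) by simp
qed

end

theorem theorem17:
  fixes C :: "('a::{field,finite} ^ 'n) set" and n k d :: nat
  assumes "linear_code C"
    and "n = CARD('n)"
    and "vec.dim C = k"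
    and "has_min_distance C d"
    and "d = n - k + 1"
    and "d \<ge> 3"
  shows "(n choose (d - 2)) div (d - 1) + 1 \<le> stopping_redundancy C d"
proof -
  interpret mds_code C k d
    using assms unfolding linear_code_def by unfold_locales simp_all
  have "(n choose (d - 2)) < stopping_redundancy C d * (d - 1)"
    using stopping_redundancy_lower_bound assms(2,6) by simp
  then have "(n choose (d - 2)) div (d - 1) < stopping_redundancy C d"
    by (rule less_mult_imp_div_less)
  then show ?thesis by simp
qed

end
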